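(* Let $S$ be a $1$-synchronizable system. Let $\tau\in T_0(S)$ and $a,b_1,\dots,b_n\in\Sigma_M$ be such that $\tau\cdot !?a\in T_0(S)$, $\tau\cdot !?b_1\cdots !?b_n\in T_0(S)$, and $\mathrm{src}(a)\neq\mathrm{src}(b_i)$ for all $i\in\{1,\dots,n\}$. Then $\tau\cdot !?a\cdot !?b_1\cdots !?b_n\in T_0(S)$, $\tau\cdot !?b_1\cdots !?b_n\cdot !?a\in T_0(S)$, and $\tau\cdot !?a\cdot !?b_1\cdots !?b_n\equiv_S\tau\cdot !?b_1\cdots !?b_n\cdot !?a$.
   Context: A message set $M=(\Sigma_M,N,\mathrm{src},\mathrm{dst})$: finite set of messages, $N\ge1$ peers, $\mathrm{src}(a)\neq\mathrm{dst}(a)\in\{1,\dots,N\}$. Actions $!a$ (by peer $\mathrm{src}(a)$), $?a$ (by peer $\mathrm{dst}(a)$); traces are finite action sequences; $!?a$ abbreviates $!a\cdot?a$. For a trace $\tau$, $\pi_!(\tau)$ is the sequence of sent messages; $\mathrm{buf}_{i\to j}(\tau)$ is the word $w$ (if any) with (sent on $i\to j$) $=$ (received on $i\to j$)$\cdot w$. $\tau$ is FIFO ($k$-bounded FIFO) if for all $i,j$ and prefixes $\tau'$, $\mathrm{buf}_{i\to j}(\tau')$ is defined (and has length $\le k$); synchronous if of the form $!?a_1\cdots!?a_k$. A system $S=(P_1,\dots,P_N)$: finite automata $P_i$ (all states accepting) over actions of peer $i$, with one FIFO channel per ordered pair $i\neq j$. A configuration: one control state per peer and contents $w_{i,j}$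 of channels; stable if all channels empty. $!a$ ($\mathrm{src}(a)=i,\mathrm{dst}(a)=j$) moves $P_i$ and appends $a$ to $w_{i,j}$; $?a$ moves $P_j$ and removes $a$ from the head of $w_{i,j}$; $c_0$ is the initial configuration. $T_k(S)$ ($k\ge1$): $k$-bounded FIFO traces $\tau$ with $c_0\xrightarrow{\tau}c$ for some $c$; $T_0(S)$: synchronous such traces; $T_\omega(S)=\bigcup_kT_k(S)$. $\tau_1\equiv_S\tau_2$ iff $\tau_1,\tau_2\in T_\omega(S)$ and there is $c$ with $c_0\xrightarrow{\tau_1}c$ and $c_0\xrightarrow{\tau_2}c$. $ST_k(S)=\{\pi_!(\tau)\mid\tau\in T_k(S)\}\cup\{(\pi_!(\tau),c)\mid c_0\xrightarrow{\tau}c,\ c\text{ stable},\ \tau\in T_k(S)\}$; $S$ is $1$-synchronizable if $ST_0(S)=ST_1(S)$. *)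

theory Defs
  imports Main
begin

record 'm msgset =
  msgs :: "'m set"
  npeers :: nat
  src :: "'m \<Rightarrow> nat"
  dst :: "'m \<Rightarrow> nat"

definition wf_msgset :: "'m msgset \<Rightarrow> bool" where
  "wf_msgset M \<longleftrightarrow> finite (msgs M) \<and> npeers M \<ge> 1 \<and>
     (\<forall>a\<in>msgs M. src M a \<noteq> dst M a \<and> src M a \<in> {1..npeers M} \<and> dst M a \<in> {1..npeers M})"

datatype 'm act = Send 'm | Recv 'm

fun actor :: "'m msgset \<Rightarrow> 'm act \<Rightarrow> nat" where
  "actor M (Send a) = src M a"
| "actor M (Recv a) = dst M a"

fun msg_of :: "'m act \<Rightarrow> 'm" where
  "msg_of (Send a) = a"
| "msg_of (Recv a) = a"

text \<open>sync [a1,...,ak] = !?a1 ... !?ak\<close>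
definition sync :: "'m list \<Rightarrow> 'm act list" where
  "sync as = concat (map (\<lambda>a. [Send a, Recv a]) as)"

definition synchronous :: "'m act list \<Rightarrow> bool" where
  "synchronous \<tau> \<longleftrightarrow> (\<exists>as. \<tau> = sync as)"

definition proj_send :: "'m act list \<Rightarrow> 'm list" where
  "proj_send \<tau> = [a. Send a \<leftarrow> \<tau>]"

definition sent_on :: "'m msgset \<Rightarrow> nat \<Rightarrow> nat \<Rightarrow> 'm act list \<Rightarrow> 'm list" where
  "sent_on M i j \<tau> = filter (\<lambda>a. src M a = i \<and> dst M a = j) (proj_send \<tau>)"

definition recv_on :: "'m msgset \<Rightarrow> nat \<Rightarrow> nat \<Rightarrow> 'm act list \<Rightarrow> 'm list" where
  "recv_on M i j \<tau> = filter (\<lambda>a. src M a = i \<and> dst M a = j) [a. Recv a \<leftarrow> \<tau>]"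

text \<open>buf_{i->j}(tau) is defined and equals w\<close>
definition buf_is :: "'m msgset \<Rightarrow> nat \<Rightarrow> nat \<Rightarrow> 'm act list \<Rightarrow> 'm list \<Rightarrow> bool" where
  "buf_is M i j \<tau> w \<longleftrightarrow> sent_on M i j \<tau> = recv_on M i j \<tau> @ w"

definition fifo_trace :: "'m msgset \<Rightarrow> 'm act list \<Rightarrow> bool" where
  "fifo_trace M \<tau> \<longleftrightarrow> (\<forall>\<tau>'. (\<exists>u. \<tau>' @ u = \<tau>) \<longrightarrow> (\<forall>i j. \<exists>w. buf_is M i j \<tau>' w))"

definition kbounded_trace :: "'m msgset \<Rightarrow> nat \<Rightarrow> 'm act list \<Rightarrow> bool" where
  "kbounded_trace M k \<tau> \<longleftrightarrow>
     (\<forall>\<tau>'. (\<exists>u. \<tau>' @ u = \<tau>) \<longrightarrow> (\<forall>i j. \<exists>w. buf_is M i j \<tau>' w \<and> length w \<le> k))"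

record ('s, 'm) peer =
  states :: "'s set"
  init :: 's
  trans :: "('s \<times> 'm act \<times> 's) set"

type_synonym ('s, 'm) system = "nat \<Rightarrow> ('s, 'm) peer"

definition wf_system :: "'m msgset \<Rightarrow> ('s, 'm) system \<Rightarrow> bool" where
  "wf_system M S \<longleftrightarrow> (\<forall>i\<in>{1..npeers M}.
     finite (states (S i)) \<and> init (S i) \<in> states (S i) \<and>
     (\<forall>(q, x, q') \<in> trans (S i). q \<in> states (S i) \<and> q' \<in> states (S i) \<and>
        msg_of x \<in> msgs M \<and> actor M x = i))"

text \<open>configuration: control state of each peer, and channel contents w i j\<close>
type_synonym ('s, 'm) config = "(nat \<Rightarrow> 's) \<times> (nat \<Rightarrow> nat \<Rightarrow> 'm list)"

definition init_config :: "('s, 'm) system \<Rightarrow> ('s, 'm) config" where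
  "init_config S = (\<lambda>i. init (S i), \<lambda>i j. [])"

definition stable :: "('s, 'm) config \<Rightarrow> bool" where
  "stable c \<longleftrightarrow> (\<forall>i j. snd c i j = [])"

fun step :: "'m msgset \<Rightarrow> ('s, 'm) system \<Rightarrow> ('s, 'm) config \<Rightarrow> 'm act \<Rightarrow> ('s, 'm) config \<Rightarrow> bool" where
  "step M S (q, w) (Send a) c' \<longleftrightarrow>
     (let i = src M a; j = dst M a in
      \<exists>q'. (q i, Send a, q') \<in> trans (S i) \<and>
            c' = (q(i := q'), w(i := (w i)(j := w i j @ [a]))))"
| "step M S (q, w) (Recv a) c' \<longleftrightarrow>
     (let i = src M a; j = dst M a in
      \<exists>q' rest. w i j = a # rest \<and> (q j, Recv a, q') \<in> trans (S j) \<and>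
            c' = (q(j := q'), w(i := (w i)(j := rest))))"

fun steps :: "'m msgset \<Rightarrow> ('s, 'm) system \<Rightarrow> ('s, 'm) config \<Rightarrow> 'm act list \<Rightarrow> ('s, 'm) config \<Rightarrow> bool" where
  "steps M S c [] c' \<longleftrightarrow> c' = c"
| "steps M S c (x # xs) c' \<longleftrightarrow> (\<exists>c''. step M S c x c'' \<and> steps M S c'' xs c')"

text \<open>T_k(S) for k >= 1, and T_0(S) = synchronous executable traces\<close>
definition T :: "'m msgset \<Rightarrow> ('s, 'm) system \<Rightarrow> nat \<Rightarrow> 'm act list set" where
  "T M S k = {\<tau>. (if k = 0 then synchronous \<tau> else kbounded_trace M k \<tau>) \<and>
                 (\<exists>c. steps M S (init_config S) \<tau> c)}"

definition T_omega :: "'m msgset \<Rightarrow> ('s, 'm) system \<Rightarrow> 'm act list set" where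
  "T_omega M S = (\<Union>k\<in>{1..}. T M S k)"

definition equiv_S :: "'m msgset \<Rightarrow> ('s, 'm) system \<Rightarrow> 'm act list \<Rightarrow> 'm act list \<Rightarrow> bool" where
  "equiv_S M S \<tau>1 \<tau>2 \<longleftrightarrow> \<tau>1 \<in> T_omega M S \<and> \<tau>2 \<in> T_omega M S \<and>
     (\<exists>c. steps M S (init_config S) \<tau>1 c \<and> steps M S (init_config S) \<tau>2 c)"

text \<open>ST_k(S): left component = send projections, right = (send projection, stable config)\<close>
definition ST :: "'m msgset \<Rightarrow> ('s, 'm) system \<Rightarrow> nat \<Rightarrow> ('m list + 'm list \<times> ('s, 'm) config) set" where
  "ST M S k = {Inl (proj_send \<tau>) | \<tau>. \<tau> \<in> T M S k} \<union>
     {Inr (proj_send \<tau>, c) | \<tau> c. \<tau> \<in> T M S k \<and> steps M S (init_config S) \<tau> c \<and> stable c}"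

definition one_synchronizable :: "'m msgset \<Rightarrow> ('s, 'm) system \<Rightarrow> bool" where
  "one_synchronizable M S \<longleftrightarrow> ST M S 0 = ST M S 1"

end

theory Submission
  imports Defs
begin

text \<open>
  A configuration reached by a trace is determined by the local runs of the peers on their
  projections together with the channel contents, and in a 1-bounded execution every send goes
  into an empty channel.  Hence one can interleave the synchronous traces at hand into
  1-bounded ones: in \<open>\<tau> !a \<cdot> !?b\<^sub>1\<cdots>!?b\<^sub>n\<close> the message \<open>a\<close> waits in its own channel (no \<open>b\<^sub>i\<close> uses it, since
  the senders differ), the sender of \<open>a\<close> acts as in \<open>\<tau>\<cdot>!?a\<cdot>\<dots>\<close> and everybody else as in
  \<open>\<tau>\<cdot>!?b\<^sub>1\<cdots>\<close>.  1-synchronizability turns each such 1-bounded trace into the synchronous trace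
  with the same sends, reaching the same stable configuration.  Induction on n then moves \<open>!?a\<close>
  step by step past the \<open>b\<^sub>i\<close>; when \<open>b\<^sub>i\<close> is addressed to the sender of \<open>a\<close>, the 1-bounded trace
  \<open>!b !a ?b ?a\<close> shows that this sender can reach the same local state in both orders.
\<close>

type_synonym 'm channels = "nat \<Rightarrow> nat \<Rightarrow> 'm list"

fun peer_run :: "('s, 'm) peer \<Rightarrow> 's \<Rightarrow> 'm act list \<Rightarrow> 's \<Rightarrow> bool" where
  "peer_run P q [] q' \<longleftrightarrow> q' = q"
| "peer_run P q (x # xs) q' \<longleftrightarrow> (\<exists>q''. (q, x, q'') \<in> trans P \<and> peer_run P q'' xs q')"

lemma peer_run_append:
  "peer_run P q (xs @ ys) q' \<longleftrightarrow> (\<exists>q''. peer_run P q xs q'' \<and> peer_run P q'' ys q')"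
  by (induction xs arbitrary: q) auto

definition proj :: "'m msgset \<Rightarrow> nat \<Rightarrow> 'm act list \<Rightarrow> 'm act list" where
  "proj M i t = filter (\<lambda>x. actor M x = i) t"

lemma proj_simps [simp]:
  "proj M i [] = []"
  "proj M i (x # t) = (if actor M x = i then x # proj M i t else proj M i t)"
  "proj M i (t @ u) = proj M i t @ proj M i u"
  by (simp_all add: proj_def)

lemma sync_simps [simp]:
  "sync [] = []"
  "sync (m # ms) = Send m # Recv m # sync ms"
  "sync (ms @ ns) = sync ms @ sync ns"
  by (simp_all add: sync_def)

lemma proj_send_simps [simp]:
  "proj_send [] = []"
  "proj_send (Send a # t) = a # proj_send t"
  "proj_send (Recv a # t) = proj_send t"
  "proj_send (t @ u) = proj_send t @ proj_send u"
  by (simp_all add: proj_send_def)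

lemma proj_send_sync [simp]: "proj_send (sync ms) = ms"
  by (induction ms) auto

lemma peer_runs_Cons:
  "(\<forall>i. peer_run (S i) (q i) (proj M i (x # t)) (q' i)) \<longleftrightarrow>
   (\<exists>p. (q (actor M x), x, p) \<in> trans (S (actor M x)) \<and>
        (\<forall>i. peer_run (S i) ((q(actor M x := p)) i) (proj M i t) (q' i)))"
  (is "?L \<longleftrightarrow> ?R")
proof
  assume L: ?L
  then obtain p where "(q (actor M x), x, p) \<in> trans (S (actor M x))"
    and "peer_run (S (actor M x)) p (proj M (actor M x) t) (q' (actor M x))"
    by (metis peer_run.simps(2) proj_simps(2))
  with L show ?R by (metis fun_upd_apply proj_simps(2))
next
  assume ?R then show ?L by (metis fun_upd_apply peer_run.simps(2) proj_simps(2))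
qed

definition local_runs :: "'m msgset \<Rightarrow> ('s, 'm) system \<Rightarrow> 'm act list \<Rightarrow> (nat \<Rightarrow> 's) \<Rightarrow> bool" where
  "local_runs M S t q \<longleftrightarrow> (\<forall>i. peer_run (S i) (init (S i)) (proj M i t) (q i))"

lemma local_runs_update:
  assumes "local_runs M S t q" and "peer_run (S i) (init (S i)) (proj M i t') x"
    and "\<And>j. j \<noteq> i \<Longrightarrow> proj M j t' = proj M j t"
  shows "local_runs M S t' (q(i := x))"
  using assms by (auto simp: local_runs_def)

definition set_chan :: "'m msgset \<Rightarrow> 'm channels \<Rightarrow> 'm \<Rightarrow> 'm list \<Rightarrow> 'm channels" where
  "set_chan M w a v = w(src M a := (w (src M a))(dst M a := v))"

lemma set_chan_apply:
  "set_chan M w a v i j = (if i = src M a \<and> j = dst M a then v else w i j)"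
  by (simp add: set_chan_def)

text \<open>The channel part of a 1-bounded execution, separated from the peers: a send needs an
  empty channel, so the message received is the only one in its channel.\<close>

fun one_bounded_run :: "'m msgset \<Rightarrow> 'm channels \<Rightarrow> 'm act list \<Rightarrow> 'm channels \<Rightarrow> bool" where
  "one_bounded_run M w [] w' \<longleftrightarrow> w' = w"
| "one_bounded_run M w (Send a # t) w' \<longleftrightarrow>
     w (src M a) (dst M a) = [] \<and> one_bounded_run M (set_chan M w a [a]) t w'"
| "one_bounded_run M w (Recv a # t) w' \<longleftrightarrow>
     w (src M a) (dst M a) = [a] \<and> one_bounded_run M (set_chan M w a []) t w'"

lemma one_bounded_run_append:
  "one_bounded_run M w (t @ u) w'' \<longleftrightarrow> (\<exists>w'. one_bounded_run M w t w' \<and> one_bounded_run M w' u w'')"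
proof (induction t arbitrary: w)
  case (Cons x t) then show ?case by (cases x) auto
qed simp

lemma one_bounded_run_sync:
  "\<forall>m\<in>set ms. w (src M m) (dst M m) = [] \<Longrightarrow>
   one_bounded_run M w (sync ms @ t) w' \<longleftrightarrow> one_bounded_run M w t w'"
proof (induction ms)
  case (Cons m ms)
  have "set_chan M (set_chan M w m [m]) m [] = w"
    using Cons.prems by (auto simp: fun_eq_iff set_chan_apply)
  with Cons show ?case by (auto simp: set_chan_apply)
qed simp

lemma one_bounded_run_buffers:
  "one_bounded_run M w t w' \<Longrightarrow> w i j @ sent_on M i j t = recv_on M i j t @ w' i j"
proof (induction t arbitrary: w)
  case Nil then show ?case by (simp add: sent_on_def recv_on_def)
next
  case (Cons x t) then show ?case
    by (cases x) (fastforce simp: sent_on_def recv_on_def set_chan_apply)+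
qed

lemma one_bounded_run_length:
  "one_bounded_run M w t w' \<Longrightarrow> \<forall>i j. length (w i j) \<le> 1 \<Longrightarrow> length (w' i j) \<le> 1"
proof (induction t arbitrary: w)
  case (Cons x t) then show ?case by (cases x) (auto simp: set_chan_apply)
qed simp

lemma kbounded_trace_one_bounded_run:
  assumes "one_bounded_run M (\<lambda>i j. []) t w"
  shows "kbounded_trace M 1 t"
  unfolding kbounded_trace_def
proof (intro allI impI)
  fix t' i j assume "\<exists>u. t' @ u = t"
  then obtain v where v: "one_bounded_run M (\<lambda>i j. []) t' v"
    using assms one_bounded_run_append by metis
  have "buf_is M i j t' (v i j)"
    using one_bounded_run_buffers[OF v, of i j] by (simp add: buf_is_def)
  moreover have "length (v i j) \<le> 1" using one_bounded_run_length[OF v] by simp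
  ultimately show "\<exists>w. buf_is M i j t' w \<and> length w \<le> 1" by blast
qed

lemma step_local:
  assumes "step M S c x c'"
  shows "(fst c (actor M x), x, fst c' (actor M x)) \<in> trans (S (actor M x))"
    and "fst c' = (fst c)(actor M x := fst c' (actor M x))"
  using assms by (cases c; cases x; auto simp: Let_def)+

lemma steps_peer_runs:
  "steps M S c t c' \<Longrightarrow> \<forall>i. peer_run (S i) (fst c i) (proj M i t) (fst c' i)"
proof (induction t arbitrary: c)
  case (Cons x t)
  then obtain c'' where "step M S c x c''" "steps M S c'' t c'" by auto
  with Cons.IH show ?case by (metis peer_runs_Cons step_local)
qed simp

lemma steps_one_bounded_run:
  "one_bounded_run M w t w' \<Longrightarrow> \<forall>i. peer_run (S i) (q i) (proj M i t) (q' i) \<Longrightarrow>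
   steps M S (q, w) t (q', w')"
proof (induction t arbitrary: q w)
  case (Cons x t)
  from Cons.prems(2) obtain p where p: "(q (actor M x), x, p) \<in> trans (S (actor M x))"
    and runs: "\<forall>i. peer_run (S i) ((q(actor M x := p)) i) (proj M i t) (q' i)"
    using peer_runs_Cons[of S q M x t q'] by blast
  show ?case
  proof (cases x)
    case (Send a)
    with Cons.prems(1) Cons.IH runs
    have "steps M S (q(src M a := p), set_chan M w a [a]) t (q', w')" by auto
    with Send p Cons.prems(1) show ?thesis by (auto simp: Let_def set_chan_def)
  next
    case (Recv a)
    with Cons.prems(1) Cons.IH runs
    have "steps M S (q(dst M a := p), set_chan M w a []) t (q', w')" by auto
    with Recv p Cons.prems(1) show ?thesis by (auto simp: Let_def set_chan_def)
  qed
qed (simp add: fun_eq_iff)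


lemma steps_init_local_runs:
  "steps M S (init_config S) t (q, w) \<Longrightarrow> local_runs M S t q"
  using steps_peer_runs by (fastforce simp: local_runs_def init_config_def)

lemma T1_one_bounded_run:
  assumes "one_bounded_run M (\<lambda>i j. []) t w" and "local_runs M S t q"
  shows "t \<in> T M S 1" and "steps M S (init_config S) t (q, w)"
proof -
  show st: "steps M S (init_config S) t (q, w)"
    using assms steps_one_bounded_run by (fastforce simp: local_runs_def init_config_def)
  then show "t \<in> T M S 1"
    using kbounded_trace_one_bounded_run[OF assms(1)] by (auto simp: T_def)
qed

lemma one_bounded_run_sync_Nil: "one_bounded_run M (\<lambda>i j. []) (sync ms) (\<lambda>i j. [])"
  using one_bounded_run_sync[of ms "\<lambda>i j. []" M "[]"] by simp

lemma steps_sync_local_runs: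
  "local_runs M S (sync ms) q \<Longrightarrow> steps M S (init_config S) (sync ms) (q, \<lambda>i j. [])"
  using T1_one_bounded_run(2)[OF one_bounded_run_sync_Nil] .

lemma T0_sync_iff: "sync ms \<in> T M S 0 \<longleftrightarrow> (\<exists>q. local_runs M S (sync ms) q)"
proof
  assume "sync ms \<in> T M S 0"
  then obtain q w where "steps M S (init_config S) (sync ms) (q, w)" by (auto simp: T_def)
  then show "\<exists>q. local_runs M S (sync ms) q" using steps_init_local_runs by blast
next
  assume "\<exists>q. local_runs M S (sync ms) q"
  then show "sync ms \<in> T M S 0"
    using steps_sync_local_runs by (fastforce simp: T_def synchronous_def)
qed

lemma T0_imp_T1: "sync ms \<in> T M S 0 \<Longrightarrow> sync ms \<in> T M S 1"
  using T0_sync_iff T1_one_bounded_run(1)[OF one_bounded_run_sync_Nil] by blast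

lemma T0_prefix: "sync (ms @ ns) \<in> T M S 0 \<Longrightarrow> sync ms \<in> T M S 0"
  unfolding T0_sync_iff local_runs_def by (simp add: peer_run_append) metis

lemma T0_eq_sync: "\<tau> \<in> T M S 0 \<Longrightarrow> \<tau> = sync (proj_send \<tau>)"
  by (auto simp: T_def synchronous_def)

lemma one_synchronizable_T1_sends:
  assumes "one_synchronizable M S" and "t \<in> T M S 1"
  shows "sync (proj_send t) \<in> T M S 0"
proof -
  have "Inl (proj_send t) \<in> ST M S 0"
    using assms by (auto simp: one_synchronizable_def ST_def)
  then show ?thesis using T0_eq_sync by (fastforce simp: ST_def)
qed

lemma one_synchronizable_T1_stable:
  assumes "one_synchronizable M S" and "t \<in> T M S 1"
    and "steps M S (init_config S) t c" and "stable c"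
  shows "steps M S (init_config S) (sync (proj_send t)) c"
proof -
  have "Inr (proj_send t, c) \<in> ST M S 0"
    using assms unfolding one_synchronizable_def ST_def by blast
  then show ?thesis using T0_eq_sync by (fastforce simp: ST_def)
qed

lemma T0_send_before:
  assumes os: "one_synchronizable M S" and a: "src M a \<noteq> dst M a"
    and "sync (ts @ [a]) \<in> T M S 0" and "sync (ts @ bs) \<in> T M S 0"
    and "\<forall>b\<in>set bs. src M b \<noteq> src M a"
  shows "sync (ts @ a # bs) \<in> T M S 0"
  using assms(3-5)
proof (induction bs rule: rev_induct)
  case (snoc b bs)
  have "sync (ts @ bs) \<in> T M S 0" using snoc.prems(2) T0_prefix[of "ts @ bs" "[b]"] by simp
  with snoc have "sync (ts @ a # bs) \<in> T M S 0" by simp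
  then obtain q1 where q1: "local_runs M S (sync (ts @ a # bs)) q1"
    using T0_sync_iff by blast
  obtain q2 where q2: "local_runs M S (sync (ts @ bs @ [b])) q2"
    using snoc.prems(2) T0_sync_iff by blast
  define t where "t = sync ts @ [Send a] @ sync bs @ [Send b]"
  \<comment> \<open>the sender of \<open>a\<close> runs as in \<open>ts\<cdot>a\<cdot>bs\<close>, every other peer as in a prefix of \<open>ts\<cdot>bs\<cdot>b\<close>\<close>
  have "\<exists>x. peer_run (S i) (init (S i)) (proj M i t) x" for i
  proof (cases "i = src M a")
    case True
    then have "proj M i t = proj M i (sync (ts @ a # bs))"
      using a snoc.prems(3) by (simp add: t_def)
    then show ?thesis using q1 by (metis local_runs_def)
  next
    case False
    then have "proj M i (sync (ts @ bs @ [b])) = proj M i t @ proj M i [Recv b]"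
      by (simp add: t_def)
    then show ?thesis using q2 by (metis local_runs_def peer_run_append)
  qed
  then obtain q where "local_runs M S t q" unfolding local_runs_def by metis
  moreover have "one_bounded_run M (\<lambda>i j. []) t (set_chan M (set_chan M (\<lambda>i j. []) a [a]) b [b])"
    using snoc.prems(3) by (simp add: t_def one_bounded_run_sync set_chan_apply)
  ultimately have "t \<in> T M S 1" by (intro T1_one_bounded_run(1))
  from one_synchronizable_T1_sends[OF os this] show ?case by (simp add: t_def)
qed simp


lemma T0_send_after:
  assumes os: "one_synchronizable M S" and wf: "\<forall>m\<in>set (a # bs). src M m \<noteq> dst M m"
    and "sync (ts @ [a]) \<in> T M S 0" and "sync (ts @ bs) \<in> T M S 0"
    and "\<forall>b\<in>set bs. src M b \<noteq> src M a"
  shows "sync (ts @ bs @ [a]) \<in> T M S 0"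
  using assms(2-5)
proof (induction bs arbitrary: ts)
  case (Cons b bs)
  have "sync (ts @ [b]) \<in> T M S 0" using Cons.prems(3) T0_prefix[of "ts @ [b]" bs] by simp
  then have "sync ((ts @ [b]) @ [a]) \<in> T M S 0"
    using T0_send_before[OF os, of b ts "[a]"] Cons.prems by auto
  then have "sync ((ts @ [b]) @ bs @ [a]) \<in> T M S 0"
    using Cons.IH[of "ts @ [b]"] Cons.prems by auto
  then show ?case by simp
qed simp

lemma sender_state_swap:
  assumes os: "one_synchronizable M S" and a: "src M a \<noteq> dst M a"
    and b: "dst M b = src M a" "src M b \<noteq> src M a"
    and T0: "sync (ts @ b # a # ms) \<in> T M S 0"
    and x: "peer_run (S (src M a)) (init (S (src M a))) (proj M (src M a) (sync (ts @ a # b # ms))) x"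
  shows "peer_run (S (src M a)) (init (S (src M a))) (proj M (src M a) (sync (ts @ b # a # ms))) x"
proof -
  define p where "p = src M a"
  obtain q where q: "local_runs M S (sync (ts @ b # a # ms)) q" using T0 T0_sync_iff by blast
  define t where "t = sync ts @ [Send b, Send a, Recv b, Recv a] @ sync ms"
  \<comment> \<open>\<open>p\<close> sends \<open>a\<close> before receiving \<open>b\<close>; all other peers act as in \<open>ts\<cdot>b\<cdot>a\<cdot>ms\<close>\<close>
  have runs: "local_runs M S t (q(p := x))"
  proof (rule local_runs_update[OF q])
    show "peer_run (S p) (init (S p)) (proj M p t) x"
      using x a b by (simp add: t_def p_def)
    show "proj M j t = proj M j (sync (ts @ b # a # ms))" if "j \<noteq> p" for j
      using that b by (simp add: t_def p_def)
  qed
  have "one_bounded_run M (\<lambda>i j. []) [Send b, Send a, Recv b, Recv a] (\<lambda>i j. [])"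
    using b by (auto simp: set_chan_apply fun_eq_iff)
  then have run: "one_bounded_run M (\<lambda>i j. []) t (\<lambda>i j. [])"
    using one_bounded_run_sync_Nil unfolding t_def one_bounded_run_append by blast
  have "steps M S (init_config S) (sync (proj_send t)) (q(p := x), \<lambda>i j. [])"
    using one_synchronizable_T1_stable[OF os T1_one_bounded_run[OF run runs]]
    by (simp add: stable_def)
  then have "steps M S (init_config S) (sync (ts @ b # a # ms)) (q(p := x), \<lambda>i j. [])"
    by (simp add: t_def)
  then have "local_runs M S (sync (ts @ b # a # ms)) (q(p := x))"
    by (rule steps_init_local_runs)
  then have "peer_run (S p) (init (S p)) (proj M p (sync (ts @ b # a # ms))) ((q(p := x)) p)"
    unfolding local_runs_def by blast
  then show ?thesis by (simp add: p_def)
qed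

lemma sender_state_delay:
  assumes os: "one_synchronizable M S" and wf: "\<forall>m\<in>set (a # bs). src M m \<noteq> dst M m"
    and "sync (ts @ [a]) \<in> T M S 0" and "sync (ts @ bs) \<in> T M S 0"
    and "\<forall>b\<in>set bs. src M b \<noteq> src M a"
    and "peer_run (S (src M a)) (init (S (src M a))) (proj M (src M a) (sync (ts @ a # bs))) x"
  shows "peer_run (S (src M a)) (init (S (src M a))) (proj M (src M a) (sync (ts @ bs @ [a]))) x"
  using assms(2-6)
proof (induction bs arbitrary: ts)
  case (Cons b bs)
  have a: "src M a \<noteq> dst M a" using Cons.prems(1) by simp
  have "sync (ts @ [b]) \<in> T M S 0" using Cons.prems(3) T0_prefix[of "ts @ [b]" bs] by simp
  then have Tba: "sync (ts @ [b, a]) \<in> T M S 0"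
    using T0_send_before[OF os, of b ts "[a]"] Cons.prems by auto
  then have Tbab: "sync (ts @ b # a # bs) \<in> T M S 0"
    using T0_send_before[OF os a, of "ts @ [b]" bs] Cons.prems by auto
  then have "peer_run (S (src M a)) (init (S (src M a))) (proj M (src M a) (sync (ts @ b # a # bs))) x"
  proof (cases "dst M b = src M a")
    case True
    have "src M b \<noteq> src M a" using Cons.prems(4) by simp
    from sender_state_swap[OF os a True this Tbab Cons.prems(5)] show ?thesis .
  next
    case False
    with Cons.prems(4,5) a show ?thesis by simp
  qed
  then have "peer_run (S (src M a)) (init (S (src M a)))
      (proj M (src M a) (sync ((ts @ [b]) @ bs @ [a]))) x"
    using Cons.IH[of "ts @ [b]"] Cons.prems Tba by auto
  then show ?case by simp
qed simp

lemma common_config_send_delay: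
  assumes os: "one_synchronizable M S" and wf: "\<forall>m\<in>set (a # bs). src M m \<noteq> dst M m"
    and A: "sync (ts @ [a]) \<in> T M S 0" and B: "sync (ts @ bs) \<in> T M S 0"
    and C: "\<forall>b\<in>set bs. src M b \<noteq> src M a"
  shows "\<exists>c. steps M S (init_config S) (sync (ts @ a # bs)) c \<and>
             steps M S (init_config S) (sync (ts @ bs @ [a])) c"
proof -
  define p where "p = src M a"
  have a: "p \<noteq> dst M a" using wf by (simp add: p_def)
  obtain q1 where q1: "local_runs M S (sync (ts @ a # bs)) q1"
    using T0_send_before[OF os _ A B C] wf T0_sync_iff by fastforce
  obtain q2 where q2: "local_runs M S (sync (ts @ bs @ [a])) q2"
    using T0_send_after[OF os wf A B C] T0_sync_iff by blast
  have "peer_run (S p) (init (S p)) (proj M p (sync (ts @ bs @ [a]))) (q1 p)"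
    unfolding p_def by (rule sender_state_delay[OF os wf A B C]) (use q1 local_runs_def in blast)
  then have R2: "local_runs M S (sync (ts @ bs @ [a])) (q2(p := q1 p))"
    using local_runs_update[OF q2] by blast
  define t where "t = sync ts @ [Send a] @ sync bs @ [Recv a]"
  \<comment> \<open>\<open>p\<close> acts as in \<open>ts\<cdot>a\<cdot>bs\<close>, all other peers (including \<open>dst a\<close>) as in \<open>ts\<cdot>bs\<cdot>a\<close>\<close>
  have runs: "local_runs M S t (q2(p := q1 p))"
  proof (rule local_runs_update[OF q2])
    have "proj M p t = proj M p (sync (ts @ a # bs))" using a by (simp add: t_def p_def)
    then show "peer_run (S p) (init (S p)) (proj M p t) (q1 p)"
      using q1 by (metis local_runs_def)
    show "proj M j t = proj M j (sync (ts @ bs @ [a]))" if "j \<noteq> p" for j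
      using that by (simp add: t_def p_def)
  qed
  have run: "one_bounded_run M (\<lambda>i j. []) t (\<lambda>i j. [])"
    using C by (simp add: t_def one_bounded_run_sync set_chan_apply fun_eq_iff)
  have "steps M S (init_config S) (sync (proj_send t)) (q2(p := q1 p), \<lambda>i j. [])"
    using one_synchronizable_T1_stable[OF os T1_one_bounded_run[OF run runs]]
    by (simp add: stable_def)
  then have "steps M S (init_config S) (sync (ts @ a # bs)) (q2(p := q1 p), \<lambda>i j. [])"
    by (simp add: t_def)
  with steps_sync_local_runs[OF R2] show ?thesis by blast
qed

theorem lemma4p5:
  fixes M :: "'m msgset" and S :: "('s, 'm) system"
    and \<tau> :: "'m act list" and a :: 'm and bs :: "'m list"
  assumes "wf_msgset M" and "wf_system M S"
    and "one_synchronizable M S"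
    and "\<tau> \<in> T M S 0"
    and "a \<in> msgs M" and "set bs \<subseteq> msgs M"
    and "\<tau> @ sync [a] \<in> T M S 0"
    and "\<tau> @ sync bs \<in> T M S 0"
    and "\<forall>b\<in>set bs. src M a \<noteq> src M b"
  shows "\<tau> @ sync [a] @ sync bs \<in> T M S 0 \<and>
         \<tau> @ sync bs @ sync [a] \<in> T M S 0 \<and>
         equiv_S M S (\<tau> @ sync [a] @ sync bs) (\<tau> @ sync bs @ sync [a])"
proof -
  define ts where "ts = proj_send \<tau>"
  have \<tau>: "\<tau> = sync ts" using T0_eq_sync[OF assms(4)] by (simp add: ts_def)
  have wf: "\<forall>m\<in>set (a # bs). src M m \<noteq> dst M m"
    using assms(1,5,6) by (auto simp: wf_msgset_def)
  have A: "sync (ts @ [a]) \<in> T M S 0" and B: "sync (ts @ bs) \<in> T M S 0"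
    using assms(7,8) \<tau> by simp_all
  have C: "\<forall>b\<in>set bs. src M b \<noteq> src M a" using assms(9) by auto
  have T1: "sync (ts @ a # bs) \<in> T M S 0" using T0_send_before[OF assms(3) _ A B C] wf by simp
  have T2: "sync (ts @ bs @ [a]) \<in> T M S 0" using T0_send_after[OF assms(3) wf A B C] .
  have "sync (ts @ a # bs) \<in> T_omega M S" "sync (ts @ bs @ [a]) \<in> T_omega M S"
    using T0_imp_T1[OF T1] T0_imp_T1[OF T2] unfolding T_omega_def by blast+
  with common_config_send_delay[OF assms(3) wf A B C]
  have "equiv_S M S (sync (ts @ a # bs)) (sync (ts @ bs @ [a]))"
    unfolding equiv_S_def by blast
  then show ?thesis using T1 T2 \<tau> by simp
qed

end
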